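(* Let $n\ge 3$, $\beta\ge1$, $0\le\alpha<n-1$, and $N\ge n+\beta$. Then for every $x\in\mathbb{R}^n$ and every fixed $R\ge0$, $$\int_{\mathbb{R}^n}\frac{\langle z\rangle^{-N}}{|x-z|^\alpha\langle |x-z|+R\rangle\langle |x-z|-R\rangle^\beta}\,dz\lesssim\frac{1}{\langle x\rangle^\alpha\langle |x|+R\rangle\langle R-|x|\rangle^\beta},$$ with implicit constant independent of $x$ and $R$.
   Context: $\langle x\rangle=(1+|x|^2)^{1/2}$. *)

theory Defs
  imports "HOL-Analysis.Analysis"
begin

text \<open>Japanese bracket: jb t = (1 + t^2)^(1/2) for real t; for vectors use jb (norm x).\<close>
definition jb :: "real \<Rightarrow> real" where
  "jb t = sqrt (1 + t\<^sup>2)"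

end

theory Submission
  imports Defs
begin

text \<open>
  Write \<open>r = |x|\<close>, \<open>s = |x - z|\<close>, \<open>t = |z|\<close>, \<open>D = |r - R|\<close> and split the integral into four regions.
  For \<open>t \<le> D/2\<close> both \<open>\<langle>s + R\<rangle>\<close> and \<open>\<langle>s - R\<rangle>\<close> are comparable to \<open>\<langle>r + R\<rangle>\<close> and \<open>\<langle>D\<rangle>\<close>, and what remains
  is the convolution bound \<open>\<integral> \<langle>z\<rangle>^-N |x - z|^-\<alpha> dz \<lesssim> \<langle>x\<rangle>^-\<alpha>\<close>. For \<open>D/2 < t \<le> r/2\<close> the factor
  \<open>\<langle>D\<rangle>^-\<beta>\<close> is paid by the decay of \<open>\<langle>z\<rangle>^-N\<close> outside the ball of radius \<open>D/2\<close>. For \<open>t > max r D / 2\<close>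
  and \<open>s \<ge> t/2\<close> the integrand is at most \<open>\<langle>t\<rangle>^(-N-1) t^-\<alpha>\<close>, whose tail beyond \<open>max r D / 2\<close> gives the
  claim. Finally, for \<open>t > max r D / 2\<close> and \<open>s < t/2\<close> one has \<open>t < 2r\<close>, \<open>D < 4r\<close> and \<open>\<langle>s + R\<rangle> \<ge> s\<close>,
  so the integrand is \<open>\<lesssim> \<langle>r\<rangle>^-N s^(-\<alpha>-1)\<close> on the ball \<open>s \<le> r\<close>, integrable because \<open>\<alpha> + 1 < n\<close>.
  All radial integrals are bounded by summing over dyadic spherical shells. The argument needs only
  \<open>\<beta> > 0\<close>.
\<close>

section \<open>Powers and the Japanese bracket\<close>

lemma powr_nonpos_le_scaled:
  fixes u v c e :: real
  assumes "0 < u" "0 < v" "0 < c" "v \<le> c * u" "e \<le> 0"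
  shows "u powr e \<le> c powr (-e) * v powr e"
proof -
  have "c powr e * u powr e \<le> v powr e"
    using powr_mono2'[of e v "c * u"] assms by (simp add: powr_mult)
  hence "c powr (-e) * (c powr e * u powr e) \<le> c powr (-e) * v powr e"
    by (rule mult_left_mono) simp
  thus ?thesis
    using assms by (simp add: powr_minus field_simps)
qed

lemma powr_minus_add_one:
  fixes x a :: real
  assumes "0 < x"
  shows "x powr (-(a + 1)) = x powr (-a) * inverse x"
proof -
  have "x powr (-(a + 1)) = x powr (-a + -1)"
    by (rule arg_cong[where f="(powr) x"]) simp
  also have "\<dots> = x powr (-a) * x powr (-1)"
    by (rule powr_add)
  finally show ?thesis
    using assms by (simp add: powr_minus)
qed

lemma jb_ge_1: "1 \<le> jb t"
  unfolding jb_def by simp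

lemma jb_pos: "0 < jb t"
  using jb_ge_1[of t] by linarith

lemma abs_le_jb: "\<bar>t\<bar> \<le> jb t"
  unfolding jb_def by (rule real_le_rsqrt) simp

lemma jb_le_1_plus_abs: "jb t \<le> 1 + \<bar>t\<bar>"
  unfolding jb_def by (rule real_sqrt_le_iff'[THEN iffD2]) (auto simp: power2_eq_square algebra_simps)

lemma jb_abs [simp]: "jb \<bar>t\<bar> = jb t"
  unfolding jb_def by simp

lemma jb_le_double: "1 \<le> t \<Longrightarrow> jb t \<le> 2 * t"
  using jb_le_1_plus_abs[of t] by simp

lemma jb_le_scale:
  assumes "\<bar>b\<bar> \<le> c * \<bar>a\<bar>" "1 \<le> c"
  shows "jb b \<le> c * jb a"
proof -
  have "b\<^sup>2 \<le> (c * \<bar>a\<bar>)\<^sup>2"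
    using power_mono[OF assms(1) abs_ge_zero, of 2] by simp
  moreover have "1 \<le> c\<^sup>2"
    using assms(2) by simp
  ultimately have "1 + b\<^sup>2 \<le> (c * jb a)\<^sup>2"
    unfolding jb_def by (simp add: algebra_simps)
  thus ?thesis
    unfolding jb_def using assms by (intro real_sqrt_le_iff'[THEN iffD2]) auto
qed

lemma measurable_jb [measurable]: "jb \<in> borel_measurable borel"
  unfolding jb_def by measurable

lemma jb_powr_nonpos_le_1: "e \<le> 0 \<Longrightarrow> jb t powr e \<le> 1"
  using powr_mono[of e 0 "jb t"] jb_ge_1[of t] by simp

lemma jb_powr_neg_le_scaled:
  assumes "\<bar>b\<bar> \<le> c * \<bar>a\<bar>" "1 \<le> c" "0 \<le> e"
  shows "jb a powr (-e) \<le> c powr e * jb b powr (-e)"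
  using powr_nonpos_le_scaled[of "jb a" "jb b" c "-e"] jb_le_scale[OF assms(1,2)] jb_pos assms
  by simp

lemma inverse_jb_le_scaled:
  assumes "\<bar>b\<bar> \<le> c * \<bar>a\<bar>" "1 \<le> c"
  shows "inverse (jb a) \<le> c * inverse (jb b)"
  using jb_le_scale[OF assms] jb_pos[of a] jb_pos[of b] assms(2) by (simp add: field_simps)

lemma one_le_jb_powr_neg_scaled:
  assumes "\<bar>u\<bar> \<le> 1" "0 \<le> e"
  shows "1 \<le> 2 powr e * jb u powr (-e)"
  using powr_nonpos_le_scaled[of 1 "jb u" 2 "-e"] jb_le_1_plus_abs[of u] jb_pos[of u] assms by simp

lemma jb_powr_times_powr_le_powr:
  assumes "0 < t" "0 \<le> M"
  shows "jb t powr (-M) * t powr (-a) \<le> t powr (-(M + a))"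
proof -
  have "jb t powr (-M) \<le> t powr (-M)"
    using assms abs_le_jb[of t] by (intro powr_mono2') auto
  hence "jb t powr (-M) * t powr (-a) \<le> t powr (-M) * t powr (-a)"
    by (rule mult_right_mono) simp
  thus ?thesis
    by (simp add: powr_add[symmetric])
qed

lemma jb_powr_times_powr_le_cases:
  assumes "0 < t" "0 \<le> M"
  shows "jb t powr (-M) * t powr (-a) \<le> (if t \<le> 1 then t powr (-a) else 0) + (if 1 < t then t powr (-(M + a)) else 0)"
proof (cases "t \<le> 1")
  case True
  have "jb t powr (-M) * t powr (-a) \<le> 1 * t powr (-a)"
    using jb_powr_nonpos_le_1[of "-M" t] \<open>0 \<le> M\<close> by (intro mult_right_mono) auto
  thus ?thesis
    using True by simp
qed (use jb_powr_times_powr_le_powr[OF assms] in simp)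

lemma max_one_powr_le_jb_powr:
  assumes "0 \<le> \<rho>" "e \<le> 0"
  shows "max 1 \<rho> powr e \<le> 2 powr (-e) * jb \<rho> powr e"
proof (cases "1 \<le> \<rho>")
  case True
  thus ?thesis
    using powr_nonpos_le_scaled[of \<rho> "jb \<rho>" 2 e] jb_le_double[OF True] jb_pos[of \<rho>] assms by simp
next
  case False
  thus ?thesis
    using one_le_jb_powr_neg_scaled[of \<rho> "-e"] assms by simp
qed

section \<open>Integral bounds up to a constant\<close>

lemma nn_integral_le_scaled_bound:
  fixes f g :: "'a \<Rightarrow> real"
  assumes f_le: "\<And>z. f z \<le> c * g z" and "0 \<le> c" and [measurable]: "g \<in> borel_measurable M"
    and g_bound: "(\<integral>\<^sup>+ z. ennreal (g z) \<partial>M) \<le> ennreal B" and "c * B \<le> E"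
  shows "(\<integral>\<^sup>+ z. ennreal (f z) \<partial>M) \<le> ennreal E"
proof -
  have "(\<integral>\<^sup>+ z. ennreal (f z) \<partial>M) \<le> (\<integral>\<^sup>+ z. ennreal c * ennreal (g z) \<partial>M)"
    using \<open>0 \<le> c\<close> by (intro nn_integral_mono) (simp add: f_le ennreal_leI flip: ennreal_mult')
  also have "\<dots> = ennreal c * (\<integral>\<^sup>+ z. ennreal (g z) \<partial>M)"
    by (simp add: nn_integral_cmult)
  also have "\<dots> \<le> ennreal (c * B)"
    using g_bound \<open>0 \<le> c\<close> by (simp add: ennreal_mult' mult_left_mono)
  also have "\<dots> \<le> ennreal E"
    using \<open>c * B \<le> E\<close> by (rule ennreal_leI)
  finally show ?thesis .
qed

lemma nn_integral_add_le:
  fixes g h :: "'a \<Rightarrow> real"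
  assumes [measurable]: "g \<in> borel_measurable M" "h \<in> borel_measurable M"
    and "\<And>z. 0 \<le> g z" "\<And>z. 0 \<le> h z" "0 \<le> A" "0 \<le> B"
    and "(\<integral>\<^sup>+ z. ennreal (g z) \<partial>M) \<le> ennreal A" "(\<integral>\<^sup>+ z. ennreal (h z) \<partial>M) \<le> ennreal B"
  shows "(\<integral>\<^sup>+ z. ennreal (g z + h z) \<partial>M) \<le> ennreal (A + B)"
proof -
  have "(\<integral>\<^sup>+ z. ennreal (g z + h z) \<partial>M) = (\<integral>\<^sup>+ z. ennreal (g z) \<partial>M) + (\<integral>\<^sup>+ z. ennreal (h z) \<partial>M)"
    using assms(3,4) by (subst nn_integral_add[symmetric]) (auto intro!: nn_integral_cong)
  also have "\<dots> \<le> ennreal A + ennreal B"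
    using assms(7,8) by (rule add_mono)
  finally show ?thesis
    using assms(5,6) by simp
qed

lemma nn_integral_split_pred:
  fixes f :: "'a \<Rightarrow> real"
  assumes [measurable]: "f \<in> borel_measurable M" "Measurable.pred M P"
  shows "(\<integral>\<^sup>+ z. ennreal (f z) \<partial>M)
    = (\<integral>\<^sup>+ z. ennreal (if P z then f z else 0) \<partial>M) + (\<integral>\<^sup>+ z. ennreal (if P z then 0 else f z) \<partial>M)"
  by (subst nn_integral_add[symmetric]) (auto intro!: nn_integral_cong)

text \<open>An estimate \<open>A \<lesssim> B\<close> with a constant uniform in two parameters is stated as
  \<open>\<exists>C\<ge>0. \<forall>x y. P x y \<longrightarrow> A x y \<le> ennreal (C * B x y)\<close>.\<close>

lemma ex_bound_add:
  fixes f g :: "'a \<Rightarrow> 'b \<Rightarrow> ennreal" and h :: "'a \<Rightarrow> 'b \<Rightarrow> real"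
  assumes "\<exists>C\<ge>0. \<forall>x y. P x y \<longrightarrow> f x y \<le> ennreal (C * h x y)"
    and "\<exists>C\<ge>0. \<forall>x y. P x y \<longrightarrow> g x y \<le> ennreal (C * h x y)"
    and h_nonneg: "\<And>x y. 0 \<le> h x y"
  shows "\<exists>C\<ge>0. \<forall>x y. P x y \<longrightarrow> f x y + g x y \<le> ennreal (C * h x y)"
proof -
  obtain C1 C2 where "0 \<le> C1" "0 \<le> C2"
    and "\<forall>x y. P x y \<longrightarrow> f x y \<le> ennreal (C1 * h x y)" "\<forall>x y. P x y \<longrightarrow> g x y \<le> ennreal (C2 * h x y)"
    using assms(1,2) by blast
  hence "\<forall>x y. P x y \<longrightarrow> f x y + g x y \<le> ennreal ((C1 + C2) * h x y)"
    using h_nonneg by (auto intro: add_mono simp: distrib_right)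
  thus ?thesis
    using \<open>0 \<le> C1\<close> \<open>0 \<le> C2\<close> by (intro exI[of _ "C1 + C2"]) simp
qed

lemma ex_pos_bound_mono:
  fixes f g :: "'a \<Rightarrow> 'b \<Rightarrow> ennreal" and h :: "'a \<Rightarrow> 'b \<Rightarrow> real"
  assumes "\<exists>C\<ge>0. \<forall>x y. P x y \<longrightarrow> g x y \<le> ennreal (C * h x y)"
    and f_le: "\<And>x y. P x y \<Longrightarrow> f x y \<le> g x y" and h_nonneg: "\<And>x y. 0 \<le> h x y"
  shows "\<exists>C>0. \<forall>x y. P x y \<longrightarrow> f x y \<le> ennreal (C * h x y)"
proof -
  obtain C where "0 \<le> C" and C: "\<forall>x y. P x y \<longrightarrow> g x y \<le> ennreal (C * h x y)"
    using assms(1) by blast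
  have "f x y \<le> ennreal ((C + 1) * h x y)" if "P x y" for x y
  proof -
    have "f x y \<le> ennreal (C * h x y)"
      using f_le[OF that] C that by (blast intro: order.trans)
    also have "\<dots> \<le> ennreal ((C + 1) * h x y)"
      using h_nonneg by (intro ennreal_leI mult_right_mono) auto
    finally show ?thesis .
  qed
  thus ?thesis
    using \<open>0 \<le> C\<close> by (intro exI[of _ "C + 1"]) simp
qed

lemma ex_bound_cases:
  fixes f :: "'a \<Rightarrow> 'b \<Rightarrow> ennreal" and h :: "'a \<Rightarrow> 'b \<Rightarrow> real"
  assumes "\<exists>C\<ge>0. \<forall>x y. P x y \<longrightarrow> Q x y \<longrightarrow> f x y \<le> ennreal (C * h x y)"
    and "\<exists>C\<ge>0. \<forall>x y. P x y \<longrightarrow> \<not> Q x y \<longrightarrow> f x y \<le> ennreal (C * h x y)"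
    and h_nonneg: "\<And>x y. 0 \<le> h x y"
  shows "\<exists>C\<ge>0. \<forall>x y. P x y \<longrightarrow> f x y \<le> ennreal (C * h x y)"
proof -
  obtain C1 C2 where "0 \<le> C1" "0 \<le> C2"
    and C1: "\<forall>x y. P x y \<longrightarrow> Q x y \<longrightarrow> f x y \<le> ennreal (C1 * h x y)"
    and C2: "\<forall>x y. P x y \<longrightarrow> \<not> Q x y \<longrightarrow> f x y \<le> ennreal (C2 * h x y)"
    using assms(1,2) by blast
  have "f x y \<le> ennreal ((C1 + C2) * h x y)" if "P x y" for x y
  proof -
    have "f x y \<le> ennreal (C1 * h x y) \<or> f x y \<le> ennreal (C2 * h x y)"
      using C1 C2 that by blast
    moreover have "ennreal (C1 * h x y) \<le> ennreal ((C1 + C2) * h x y)" "ennreal (C2 * h x y) \<le> ennreal ((C1 + C2) * h x y)"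
      using \<open>0 \<le> C1\<close> \<open>0 \<le> C2\<close> h_nonneg by (auto intro!: ennreal_leI mult_right_mono)
    ultimately show ?thesis
      by (auto intro: order.trans)
  qed
  thus ?thesis
    using \<open>0 \<le> C1\<close> \<open>0 \<le> C2\<close> by (intro exI[of _ "C1 + C2"]) auto
qed

section \<open>Integrals of powers of the norm\<close>

lemma exists_dyadic_interval:
  fixes a b :: real
  assumes "0 < a" "a \<le> b"
  shows "\<exists>k. a * 2 ^ k \<le> b \<and> b < a * 2 ^ Suc k"
proof -
  define P where "P m \<longleftrightarrow> b < a * 2 ^ m" for m :: nat
  obtain m where "b / a < 2 ^ m"
    using real_arch_pow[of 2 "b / a"] by auto
  hence "P m"
    using assms by (simp add: P_def field_simps)
  hence P_Least: "P (LEAST m. P m)"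
    by (rule LeastI)
  moreover have "\<not> P 0"
    using assms by (simp add: P_def)
  ultimately obtain k where k: "(LEAST m. P m) = Suc k"
    by (metis not0_implies_Suc)
  hence "\<not> P k"
    using not_less_Least[of k P] by auto
  thus ?thesis
    using P_Least k by (auto simp: P_def not_less)
qed

lemma nn_integral_le_geometric_shell_sum:
  fixes f :: "'a::euclidean_space \<Rightarrow> ennreal" and S :: "nat \<Rightarrow> 'a set"
  assumes S_sets: "\<And>k. S k \<in> sets lborel" and S_sub: "\<And>k. S k \<subseteq> cball c (r k)"
    and r_nonneg: "\<And>k. 0 \<le> r k" and b_nonneg: "\<And>k. 0 \<le> b k"
    and f_le: "\<And>y. \<exists>k. f y \<le> ennreal (b k * indicator (S k) y)"
    and b_r: "\<And>k. b k * r k ^ DIM('a) = A * q ^ k" and A_nonneg: "0 \<le> A" and q_nonneg: "0 \<le> q" and q_less: "q < 1"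
  shows "(\<integral>\<^sup>+ y. f y \<partial>lborel) \<le> ennreal (unit_ball_vol DIM('a) / (1 - q) * A)"
proof -
  define V where "V = unit_ball_vol DIM('a)"
  have "0 \<le> V"
    unfolding V_def by simp
  have S_borel [measurable]: "S k \<in> sets borel" for k
    using S_sets by simp
  have shell: "(\<integral>\<^sup>+ y. ennreal (b k * indicator (S k) y) \<partial>lborel) \<le> ennreal (V * A * q ^ k)" for k
  proof -
    have "(\<integral>\<^sup>+ y. ennreal (b k * indicator (S k) y) \<partial>lborel) = ennreal (b k) * emeasure lborel (S k)"
      using b_nonneg[of k] S_sets[of k]
      by (simp add: ennreal_mult' ennreal_indicator nn_integral_cmult_indicator)
    also have "\<dots> \<le> ennreal (b k) * emeasure lborel (cball c (r k))"
      by (intro mult_left_mono emeasure_mono S_sub) auto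
    also have "\<dots> = ennreal (V * (b k * r k ^ DIM('a)))"
      using b_nonneg[of k] r_nonneg[of k]
      by (simp add: emeasure_cball V_def ennreal_mult' mult.left_commute)
    finally show ?thesis
      by (simp add: b_r mult.assoc)
  qed
  have "f y \<le> (\<Sum>k. ennreal (b k * indicator (S k) y))" for y
  proof -
    obtain k where "f y \<le> ennreal (b k * indicator (S k) y)"
      using f_le by blast
    also have "\<dots> \<le> (\<Sum>k. ennreal (b k * indicator (S k) y))"
      using sum_le_suminf[OF summableI, of "{k}"] by simp
    finally show ?thesis .
  qed
  hence "(\<integral>\<^sup>+ y. f y \<partial>lborel) \<le> (\<integral>\<^sup>+ y. (\<Sum>k. ennreal (b k * indicator (S k) y)) \<partial>lborel)"
    by (intro nn_integral_mono)
  also have "\<dots> = (\<Sum>k. \<integral>\<^sup>+ y. ennreal (b k * indicator (S k) y) \<partial>lborel)"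
    by (intro nn_integral_suminf) measurable
  also have "\<dots> \<le> (\<Sum>k. ennreal (V * A * q ^ k))"
    by (intro suminf_le shell) auto
  also have "\<dots> = ennreal (V / (1 - q) * A)"
  proof -
    have "(\<lambda>k. V * A * q ^ k) sums (V * A * (1 / (1 - q)))"
      using q_nonneg q_less by (intro sums_mult geometric_sums) auto
    moreover have "V * A * (1 / (1 - q)) = V / (1 - q) * A"
      by simp
    ultimately show ?thesis
      using \<open>0 \<le> V\<close> A_nonneg q_nonneg q_less by (intro sums_unique[symmetric]) simp
  qed
  finally show ?thesis
    by (simp add: V_def)
qed

lemma shrinking_shell_weight_eq:
  fixes \<rho> a :: real
  assumes "0 < \<rho>"
  shows "(\<rho> / 2 ^ Suc k) powr (-a) * (\<rho> / 2 ^ k) ^ DIM('a)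
    = 2 powr a * \<rho> powr (DIM('a) - a) * (2 powr (a - DIM('a::euclidean_space))) ^ k"
proof -
  have e1: "(\<rho> / 2 ^ Suc k) powr (-a) = \<rho> powr (-a) * 2 powr a * (2 powr a) ^ k"
    using assms by (simp add: powr_divide powr_minus_divide powr_mult powr_powr mult.commute flip: powr_realpow)
  have e2: "(\<rho> / 2 ^ k) ^ DIM('a) = \<rho> powr DIM('a) * (2 powr (- DIM('a))) ^ k"
    using assms by (simp add: powr_divide powr_realpow power_divide powr_minus_divide flip: power_mult)
  have "(\<rho> / 2 ^ Suc k) powr (-a) * (\<rho> / 2 ^ k) ^ DIM('a)
      = 2 powr a * (\<rho> powr (-a) * \<rho> powr DIM('a)) * ((2 powr a) ^ k * (2 powr (- DIM('a))) ^ k)"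
    unfolding e1 e2 by (simp only: ac_simps)
  thus ?thesis
    by (simp add: powr_add[symmetric] flip: power_mult_distrib)
qed

lemma growing_shell_weight_eq:
  fixes \<rho> M :: real
  assumes "0 < \<rho>"
  shows "(\<rho> * 2 ^ k) powr (-M) * (\<rho> * 2 ^ Suc k) ^ DIM('a)
    = 2 powr DIM('a) * \<rho> powr (DIM('a) - M) * (2 powr (DIM('a::euclidean_space) - M)) ^ k"
proof -
  have e1: "(\<rho> * 2 ^ k) powr (-M) = \<rho> powr (-M) * (2 powr (-M)) ^ k"
    using assms by (simp add: powr_mult powr_powr mult.commute flip: powr_realpow)
  have e2: "(\<rho> * 2 ^ Suc k) ^ DIM('a) = \<rho> powr DIM('a) * 2 powr DIM('a) * (2 powr DIM('a)) ^ k"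
    using assms by (simp add: powr_realpow power_mult_distrib flip: power_mult)
  have "(\<rho> * 2 ^ k) powr (-M) * (\<rho> * 2 ^ Suc k) ^ DIM('a)
      = 2 powr DIM('a) * (\<rho> powr (-M) * \<rho> powr DIM('a)) * ((2 powr (-M)) ^ k * (2 powr DIM('a)) ^ k)"
    unfolding e1 e2 by (simp only: ac_simps)
  thus ?thesis
    by (simp add: powr_add[symmetric] flip: power_mult_distrib)
qed

lemma nn_integral_dist_powr_cball_le:
  fixes a :: real
  assumes a_nonneg: "0 \<le> a" and a_less: "a < DIM('a)"
  shows "\<exists>C\<ge>0. \<forall>(x::'a::euclidean_space) \<rho>. 0 \<le> \<rho> \<longrightarrow>
     (\<integral>\<^sup>+ z. ennreal (if norm (x - z) \<le> \<rho> then norm (x - z) powr (-a) else 0) \<partial>lborel)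
       \<le> ennreal (C * \<rho> powr (DIM('a) - a))"
proof (intro exI conjI allI impI)
  define q :: real where "q = 2 powr (a - DIM('a))"
  have "0 \<le> q" "q < 1"
    unfolding q_def using a_less powr_less_mono[of "a - DIM('a)" 0 2] by auto
  thus "0 \<le> unit_ball_vol DIM('a) / (1 - q) * 2 powr a"
    by simp
  fix x :: 'a and \<rho> :: real
  assume "0 \<le> \<rho>"
  define S where "S k = {z. \<rho> / 2 ^ Suc k < dist x z \<and> dist x z \<le> \<rho> / 2 ^ k}" for k
  define b where "b k = (\<rho> / 2 ^ Suc k) powr (-a)" for k
  have "(\<integral>\<^sup>+ z. ennreal (if norm (x - z) \<le> \<rho> then norm (x - z) powr (-a) else 0) \<partial>lborel)
      \<le> ennreal (unit_ball_vol DIM('a) / (1 - q) * (2 powr a * \<rho> powr (DIM('a) - a)))"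
  proof (rule nn_integral_le_geometric_shell_sum[of S x "\<lambda>k. \<rho> / 2 ^ k" b])
    show "S k \<in> sets lborel" for k
      unfolding S_def by measurable
    show "S k \<subseteq> cball x (\<rho> / 2 ^ k)" for k
      unfolding S_def by auto
    show "b k * (\<rho> / 2 ^ k) ^ DIM('a) = 2 powr a * \<rho> powr (DIM('a) - a) * q ^ k" for k
      using shrinking_shell_weight_eq[of \<rho> k a] \<open>0 \<le> \<rho>\<close>
      by (cases "\<rho> = 0") (auto simp: b_def q_def)
    fix z :: 'a
    show "\<exists>k. ennreal (if norm (x - z) \<le> \<rho> then norm (x - z) powr (-a) else 0) \<le> ennreal (b k * indicator (S k) z)"
    proof (cases "0 < norm (x - z) \<and> norm (x - z) \<le> \<rho>")
      case True
      hence "0 < norm (x - z)" "0 < \<rho>"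
        by linarith+
      then obtain k where k: "norm (x - z) * 2 ^ k \<le> \<rho>" "\<rho> < norm (x - z) * 2 ^ Suc k"
        using exists_dyadic_interval[of "norm (x - z)" \<rho>] True by auto
      hence "z \<in> S k"
        by (simp add: S_def dist_norm field_simps del: power_Suc)
      moreover have "norm (x - z) powr (-a) \<le> b k"
        unfolding b_def using k a_nonneg \<open>0 < norm (x - z)\<close> \<open>0 < \<rho>\<close>
        by (intro powr_mono2') (auto simp: field_simps simp del: power_Suc)
      ultimately show ?thesis
        using True by (intro exI[of _ k] ennreal_leI) simp
    qed auto
  qed (use \<open>0 \<le> \<rho>\<close> \<open>0 \<le> q\<close> \<open>q < 1\<close> in \<open>auto simp: b_def\<close>)
  thus "(\<integral>\<^sup>+ z. ennreal (if norm (x - z) \<le> \<rho> then norm (x - z) powr (-a) else 0) \<partial>lborel)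
      \<le> ennreal (unit_ball_vol DIM('a) / (1 - q) * 2 powr a * \<rho> powr (DIM('a) - a))"
    by (simp add: mult.assoc)
qed

lemma nn_integral_norm_powr_outside_ball_le:
  fixes M :: real
  assumes M_greater: "DIM('a) < M"
  shows "\<exists>C\<ge>0. \<forall>\<rho>>0.
     (\<integral>\<^sup>+ z. ennreal (if \<rho> < norm z then norm (z::'a::euclidean_space) powr (-M) else 0) \<partial>lborel)
       \<le> ennreal (C * \<rho> powr (DIM('a) - M))"
proof (intro exI conjI allI impI)
  define q :: real where "q = 2 powr (DIM('a) - M)"
  have "0 \<le> q" "q < 1"
    unfolding q_def using M_greater powr_less_mono[of "DIM('a) - M" 0 2] by auto
  thus "0 \<le> unit_ball_vol DIM('a) / (1 - q) * 2 powr DIM('a)"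
    by simp
  fix \<rho> :: real
  assume "0 < \<rho>"
  define S where "S k = {z::'a. \<rho> * 2 ^ k \<le> dist 0 z \<and> dist 0 z < \<rho> * 2 ^ Suc k}" for k
  define b where "b k = (\<rho> * 2 ^ k) powr (-M)" for k
  have "(\<integral>\<^sup>+ z. ennreal (if \<rho> < norm z then norm (z::'a) powr (-M) else 0) \<partial>lborel)
      \<le> ennreal (unit_ball_vol DIM('a) / (1 - q) * (2 powr DIM('a) * \<rho> powr (DIM('a) - M)))"
  proof (rule nn_integral_le_geometric_shell_sum[of S 0 "\<lambda>k. \<rho> * 2 ^ Suc k" b])
    show "S k \<in> sets lborel" for k
      unfolding S_def by measurable
    show "S k \<subseteq> cball 0 (\<rho> * 2 ^ Suc k)" for k
      unfolding S_def by auto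
    show "b k * (\<rho> * 2 ^ Suc k) ^ DIM('a) = 2 powr DIM('a) * \<rho> powr (DIM('a) - M) * q ^ k" for k
      using growing_shell_weight_eq[OF \<open>0 < \<rho>\<close>] by (simp add: b_def q_def)
    fix z :: 'a
    show "\<exists>k. ennreal (if \<rho> < norm z then norm z powr (-M) else 0) \<le> ennreal (b k * indicator (S k) z)"
    proof (cases "\<rho> < norm z")
      case True
      then obtain k where k: "\<rho> * 2 ^ k \<le> norm z" "norm z < \<rho> * 2 ^ Suc k"
        using exists_dyadic_interval[of \<rho> "norm z"] \<open>0 < \<rho>\<close> by auto
      hence "z \<in> S k"
        by (simp add: S_def del: power_Suc)
      moreover have "norm z powr (-M) \<le> b k"
        unfolding b_def using k M_greater \<open>0 < \<rho>\<close>
        by (intro powr_mono2') (auto simp del: power_Suc)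
      ultimately show ?thesis
        using True by (intro exI[of _ k] ennreal_leI) simp
    qed auto
  qed (use \<open>0 < \<rho>\<close> \<open>0 \<le> q\<close> \<open>q < 1\<close> in \<open>auto simp: b_def\<close>)
  thus "(\<integral>\<^sup>+ z. ennreal (if \<rho> < norm z then norm (z::'a) powr (-M) else 0) \<partial>lborel)
      \<le> ennreal (unit_ball_vol DIM('a) / (1 - q) * 2 powr DIM('a) * \<rho> powr (DIM('a) - M))"
    by (simp add: mult.assoc)
qed

declare borel_closed[OF closed_cball, measurable]

lemma nn_integral_jb_powr_le:
  fixes N :: real
  assumes "DIM('a) < N"
  shows "\<exists>K\<ge>0. (\<integral>\<^sup>+ z. ennreal (jb (norm (z::'a::euclidean_space)) powr (-N)) \<partial>lborel) \<le> ennreal K"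
proof -
  obtain C where "0 \<le> C" and C: "\<And>\<rho>. 0 < \<rho> \<Longrightarrow>
     (\<integral>\<^sup>+ z. ennreal (if \<rho> < norm z then norm (z::'a) powr (-N) else 0) \<partial>lborel) \<le> ennreal (C * \<rho> powr (DIM('a) - N))"
    using nn_integral_norm_powr_outside_ball_le[OF assms] by blast
  define V where "V = unit_ball_vol DIM('a)"
  have "0 \<le> V"
    unfolding V_def by simp
  have "ennreal (jb (norm z) powr (-N))
      \<le> ennreal (indicator (cball 0 1) z) + ennreal (if 1 < norm z then norm (z::'a) powr (-N) else 0)" for z
  proof (cases "1 < norm z")
    case True
    hence "jb (norm z) powr (-N) \<le> norm z powr (-N)"
      using assms abs_le_jb[of "norm z"] by (intro powr_mono2') auto
    thus ?thesis
      using True by (simp add: ennreal_leI)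
  qed (use jb_powr_nonpos_le_1[of "-N" "norm z"] assms in auto)
  hence "(\<integral>\<^sup>+ z. ennreal (jb (norm (z::'a)) powr (-N)) \<partial>lborel)
      \<le> (\<integral>\<^sup>+ z. ennreal (indicator (cball (0::'a) 1) z) \<partial>lborel)
        + (\<integral>\<^sup>+ z. ennreal (if 1 < norm z then norm (z::'a) powr (-N) else 0) \<partial>lborel)"
    by (subst nn_integral_add[symmetric]) (auto intro: nn_integral_mono)
  also have "\<dots> \<le> ennreal V + ennreal C"
    using C[of 1] by (intro add_mono) (simp_all add: ennreal_indicator emeasure_cball V_def)
  finally show ?thesis
    using \<open>0 \<le> V\<close> \<open>0 \<le> C\<close> by (intro exI[of _ "V + C"]) simp
qed

lemma nn_integral_jb_powr_norm_powr_outside_ball_le_max_one: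
  fixes M a :: real
  assumes M_nonneg: "0 \<le> M" and a_nonneg: "0 \<le> a" and a_less: "a < DIM('a)"
    and Ma_greater: "DIM('a) < M + a"
  shows "\<exists>C\<ge>0. \<forall>\<rho>\<ge>0.
    (\<integral>\<^sup>+ z. ennreal (if \<rho> < norm z then jb (norm (z::'a::euclidean_space)) powr (-M) * norm z powr (-a) else 0) \<partial>lborel)
      \<le> ennreal (C * max 1 \<rho> powr (DIM('a) - M - a))"
proof -
  obtain Cb where "0 \<le> Cb" and Cb_all: "\<forall>(x::'a) \<rho>. 0 \<le> \<rho> \<longrightarrow>
     (\<integral>\<^sup>+ z. ennreal (if norm (x - z) \<le> \<rho> then norm (x - z) powr (-a) else 0) \<partial>lborel)
       \<le> ennreal (Cb * \<rho> powr (DIM('a) - a))"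
    using nn_integral_dist_powr_cball_le[OF a_nonneg a_less] by blast
  have Cb: "(\<integral>\<^sup>+ z. ennreal (if norm z \<le> 1 then norm (z::'a) powr (-a) else 0) \<partial>lborel) \<le> ennreal Cb"
    using Cb_all[rule_format, where x=0 and \<rho>=1] by (simp cong: if_cong)
  obtain Ct where "0 \<le> Ct" and Ct: "\<And>\<rho>. 0 < \<rho> \<Longrightarrow>
     (\<integral>\<^sup>+ z. ennreal (if \<rho> < norm z then norm (z::'a) powr (-(M + a)) else 0) \<partial>lborel)
       \<le> ennreal (Ct * \<rho> powr (DIM('a) - M - a))"
    using nn_integral_norm_powr_outside_ball_le[OF Ma_greater] by (auto simp: diff_diff_add)
  have "(\<integral>\<^sup>+ z. ennreal (if \<rho> < norm z then jb (norm (z::'a)) powr (-M) * norm z powr (-a) else 0) \<partial>lborel)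
      \<le> ennreal ((Cb + Ct) * max 1 \<rho> powr (DIM('a) - M - a))" if "0 \<le> \<rho>" for \<rho>
  proof (cases "1 \<le> \<rho>")
    case True
    show ?thesis
    proof (rule nn_integral_le_scaled_bound[where c=1])
      show "(if \<rho> < norm z then jb (norm z) powr (-M) * norm z powr (-a) else 0)
          \<le> 1 * (if \<rho> < norm z then norm (z::'a) powr (-(M + a)) else 0)" for z
        using jb_powr_times_powr_le_powr[OF _ M_nonneg, of "norm z" a] True by (cases "z = 0") auto
      show "1 * (Ct * \<rho> powr (DIM('a) - M - a)) \<le> (Cb + Ct) * max 1 \<rho> powr (DIM('a) - M - a)"
        using True \<open>0 \<le> Cb\<close> by (simp add: distrib_right)
    qed (use Ct True in auto)
  next
    case False
    show ?thesis
    proof (rule nn_integral_le_scaled_bound[where c=1])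
      show "(if \<rho> < norm z then jb (norm z) powr (-M) * norm z powr (-a) else 0)
          \<le> 1 * ((if norm z \<le> 1 then norm (z::'a) powr (-a) else 0)
            + (if 1 < norm z then norm z powr (-(M + a)) else 0))" for z
        using jb_powr_times_powr_le_cases[OF _ M_nonneg, of "norm z" a] that by (cases "z = 0") auto
      show "(\<integral>\<^sup>+ z. ennreal ((if norm z \<le> 1 then norm (z::'a) powr (-a) else 0)
            + (if 1 < norm z then norm z powr (-(M + a)) else 0)) \<partial>lborel) \<le> ennreal (Cb + Ct)"
        using Cb Ct[of 1] \<open>0 \<le> Cb\<close> \<open>0 \<le> Ct\<close> by (intro nn_integral_add_le) auto
    qed (use False in \<open>simp_all, measurable\<close>)
  qed
  thus ?thesis
    using \<open>0 \<le> Cb\<close> \<open>0 \<le> Ct\<close> by (intro exI[of _ "Cb + Ct"]) auto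
qed

lemma nn_integral_jb_powr_norm_powr_outside_ball_le:
  fixes M a :: real
  assumes "0 \<le> M" "0 \<le> a" "a < DIM('a)" and Ma_greater: "DIM('a) < M + a"
  shows "\<exists>C\<ge>0. \<forall>\<rho>\<ge>0.
    (\<integral>\<^sup>+ z. ennreal (if \<rho> < norm z then jb (norm (z::'a::euclidean_space)) powr (-M) * norm z powr (-a) else 0) \<partial>lborel)
      \<le> ennreal (C * jb \<rho> powr (DIM('a) - M - a))"
proof -
  obtain C where "0 \<le> C" and C: "\<forall>\<rho>\<ge>0.
    (\<integral>\<^sup>+ z. ennreal (if \<rho> < norm z then jb (norm (z::'a)) powr (-M) * norm z powr (-a) else 0) \<partial>lborel)
      \<le> ennreal (C * max 1 \<rho> powr (DIM('a) - M - a))"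
    using nn_integral_jb_powr_norm_powr_outside_ball_le_max_one[OF assms] by blast
  have "C * max 1 \<rho> powr (DIM('a) - M - a) \<le> C * 2 powr (-(DIM('a) - M - a)) * jb \<rho> powr (DIM('a) - M - a)"
    if "0 \<le> \<rho>" for \<rho>
    using mult_left_mono[OF max_one_powr_le_jb_powr[OF that, of "DIM('a) - M - a"] \<open>0 \<le> C\<close>] Ma_greater
    by (simp add: mult.assoc)
  hence "\<forall>\<rho>\<ge>0.
    (\<integral>\<^sup>+ z. ennreal (if \<rho> < norm z then jb (norm (z::'a)) powr (-M) * norm z powr (-a) else 0) \<partial>lborel)
      \<le> ennreal (C * 2 powr (-(DIM('a) - M - a)) * jb \<rho> powr (DIM('a) - M - a))"
    using C by (blast intro: order.trans ennreal_leI)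
  thus ?thesis
    using \<open>0 \<le> C\<close> by (intro exI[of _ "C * 2 powr (-(DIM('a) - M - a))"]) simp
qed

section \<open>Convolution estimates\<close>

lemma norm_diff_triangle_ineqs:
  fixes x z :: "'a::real_normed_vector"
  shows "norm x \<le> norm (x - z) + norm z" "norm (x - z) \<le> norm x + norm z" "norm z \<le> norm x + norm (x - z)"
  using norm_triangle_ineq4[of x z] norm_triangle_sub[of x z] norm_triangle_sub[of z x]
  by (auto simp: norm_minus_commute)

lemma jb_powr_times_powr_le_split:
  fixes r s t N \<alpha> :: real
  assumes "0 \<le> r" "r / 2 < s" "0 \<le> \<alpha>" "0 \<le> N"
  shows "jb t powr (-N) * s powr (-\<alpha>)
    \<le> 3 powr \<alpha> * jb r powr (-\<alpha>) * (jb t powr (-N) + (if s \<le> 1 then s powr (-\<alpha>) else 0))"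
proof (cases "s \<le> 1")
  case True
  have "1 \<le> 3 powr \<alpha> * jb r powr (-\<alpha>)"
    using powr_nonpos_le_scaled[of 1 "jb r" 3 "-\<alpha>"] jb_le_1_plus_abs[of r] jb_pos[of r] True assms
    by simp
  hence "s powr (-\<alpha>) \<le> 3 powr \<alpha> * jb r powr (-\<alpha>) * s powr (-\<alpha>)"
    using mult_right_mono[of 1 _ "s powr (-\<alpha>)"] by simp
  moreover have "jb t powr (-N) * s powr (-\<alpha>) \<le> s powr (-\<alpha>)"
    using jb_powr_nonpos_le_1[of "-N" t] mult_right_mono[of _ 1 "s powr (-\<alpha>)"] assms by simp
  moreover have "0 \<le> 3 powr \<alpha> * jb r powr (-\<alpha>) * jb t powr (-N)"
    by simp
  ultimately have "jb t powr (-N) * s powr (-\<alpha>) \<le> 3 powr \<alpha> * jb r powr (-\<alpha>) * (jb t powr (-N) + s powr (-\<alpha>))"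
    by (simp only: distrib_left)
  thus ?thesis
    using True by simp
next
  case False
  have "s powr (-\<alpha>) \<le> 3 powr \<alpha> * jb r powr (-\<alpha>)"
    using powr_nonpos_le_scaled[of s "jb r" 3 "-\<alpha>"] jb_le_1_plus_abs[of r] jb_pos[of r] False assms
    by simp
  hence "jb t powr (-N) * s powr (-\<alpha>) \<le> jb t powr (-N) * (3 powr \<alpha> * jb r powr (-\<alpha>))"
    by (rule mult_left_mono) simp
  thus ?thesis
    using False by (simp add: mult.commute)
qed

lemma jb_powr_times_half_powr_le:
  fixes d :: real
  assumes "0 \<le> r" "\<alpha> \<le> d" "d \<le> N"
  shows "jb r powr (-N) * (r / 2) powr (d - \<alpha>) \<le> jb r powr (-\<alpha>)"
proof -
  have "jb r powr (-N) * (r / 2) powr (d - \<alpha>) \<le> jb r powr (-N) * jb r powr (d - \<alpha>)"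
    using assms abs_le_jb[of r] by (intro mult_left_mono powr_mono2) auto
  also have "\<dots> = jb r powr (d - \<alpha> - N)"
    by (simp add: powr_add[symmetric])
  also have "\<dots> \<le> jb r powr (-\<alpha>)"
    using assms jb_ge_1 by (intro powr_mono) auto
  finally show ?thesis .
qed

lemma nn_integral_jb_powr_dist_powr_near_le:
  fixes N \<alpha> :: real
  assumes N_ge: "DIM('a) \<le> N" and \<alpha>_nonneg: "0 \<le> \<alpha>" and \<alpha>_less: "\<alpha> < DIM('a)"
  shows "\<exists>C\<ge>0. \<forall>x::'a::euclidean_space.
    (\<integral>\<^sup>+ z. ennreal (if norm (x - z) \<le> norm x / 2 then jb (norm z) powr (-N) * norm (x - z) powr (-\<alpha>) else 0) \<partial>lborel)
      \<le> ennreal (C * jb (norm x) powr (-\<alpha>))"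
proof -
  obtain Cb where "0 \<le> Cb" and Cb: "\<forall>(x::'a) \<rho>. 0 \<le> \<rho> \<longrightarrow>
     (\<integral>\<^sup>+ z. ennreal (if norm (x - z) \<le> \<rho> then norm (x - z) powr (-\<alpha>) else 0) \<partial>lborel)
       \<le> ennreal (Cb * \<rho> powr (DIM('a) - \<alpha>))"
    using nn_integral_dist_powr_cball_le[OF \<alpha>_nonneg \<alpha>_less] by blast
  have "(\<integral>\<^sup>+ z. ennreal (if norm (x - z) \<le> norm x / 2 then jb (norm z) powr (-N) * norm (x - z) powr (-\<alpha>) else 0) \<partial>lborel)
      \<le> ennreal (2 powr N * Cb * jb (norm x) powr (-\<alpha>))" for x :: 'a
  proof (rule nn_integral_le_scaled_bound)
    show "(if norm (x - z) \<le> norm x / 2 then jb (norm z) powr (-N) * norm (x - z) powr (-\<alpha>) else 0)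
        \<le> 2 powr N * jb (norm x) powr (-N) * (if norm (x - z) \<le> norm x / 2 then norm (x - z) powr (-\<alpha>) else 0)" for z
    proof (cases "norm (x - z) \<le> norm x / 2")
      case True
      hence "jb (norm z) powr (-N) \<le> 2 powr N * jb (norm x) powr (-N)"
        using norm_diff_triangle_ineqs(1)[of x z] N_ge by (intro jb_powr_neg_le_scaled) auto
      thus ?thesis
        using True by (simp add: mult_right_mono)
    qed simp
    show "(\<integral>\<^sup>+ z. ennreal (if norm (x - z) \<le> norm x / 2 then norm (x - z) powr (-\<alpha>) else 0) \<partial>lborel)
        \<le> ennreal (Cb * (norm x / 2) powr (DIM('a) - \<alpha>))"
      using Cb[rule_format, where x=x and \<rho>="norm x / 2"] by simp
    have "jb (norm x) powr (-N) * (norm x / 2) powr (DIM('a) - \<alpha>) \<le> jb (norm x) powr (-\<alpha>)"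
      using \<alpha>_less N_ge by (intro jb_powr_times_half_powr_le) auto
    from mult_left_mono[OF this, of "2 powr N * Cb"]
    show "2 powr N * jb (norm x) powr (-N) * (Cb * (norm x / 2) powr (DIM('a) - \<alpha>)) \<le> 2 powr N * Cb * jb (norm x) powr (-\<alpha>)"
      using \<open>0 \<le> Cb\<close> by (simp add: ac_simps)
  qed (auto, measurable)
  moreover have "0 \<le> 2 powr N * Cb"
    using \<open>0 \<le> Cb\<close> by simp
  ultimately show ?thesis
    by blast
qed

lemma nn_integral_jb_powr_dist_powr_far_le:
  fixes N \<alpha> :: real
  assumes N_greater: "DIM('a) < N" and \<alpha>_nonneg: "0 \<le> \<alpha>" and \<alpha>_less: "\<alpha> < DIM('a)"
  shows "\<exists>C\<ge>0. \<forall>x::'a::euclidean_space.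
    (\<integral>\<^sup>+ z. ennreal (if norm (x - z) \<le> norm x / 2 then 0 else jb (norm z) powr (-N) * norm (x - z) powr (-\<alpha>)) \<partial>lborel)
      \<le> ennreal (C * jb (norm x) powr (-\<alpha>))"
proof -
  obtain Cb where "0 \<le> Cb" and Cb: "\<forall>(x::'a) \<rho>. 0 \<le> \<rho> \<longrightarrow>
     (\<integral>\<^sup>+ z. ennreal (if norm (x - z) \<le> \<rho> then norm (x - z) powr (-\<alpha>) else 0) \<partial>lborel)
       \<le> ennreal (Cb * \<rho> powr (DIM('a) - \<alpha>))"
    using nn_integral_dist_powr_cball_le[OF \<alpha>_nonneg \<alpha>_less] by blast
  obtain K where "0 \<le> K" and K: "(\<integral>\<^sup>+ z. ennreal (jb (norm (z::'a)) powr (-N)) \<partial>lborel) \<le> ennreal K"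
    using nn_integral_jb_powr_le[OF N_greater] by blast
  have "(\<integral>\<^sup>+ z. ennreal (if norm (x - z) \<le> norm x / 2 then 0 else jb (norm z) powr (-N) * norm (x - z) powr (-\<alpha>)) \<partial>lborel)
      \<le> ennreal (3 powr \<alpha> * (K + Cb) * jb (norm x) powr (-\<alpha>))" for x :: 'a
  proof (rule nn_integral_le_scaled_bound)
    show "(if norm (x - z) \<le> norm x / 2 then 0 else jb (norm z) powr (-N) * norm (x - z) powr (-\<alpha>))
        \<le> 3 powr \<alpha> * jb (norm x) powr (-\<alpha>)
          * (jb (norm z) powr (-N) + (if norm (x - z) \<le> 1 then norm (x - z) powr (-\<alpha>) else 0))" for z
      using jb_powr_times_powr_le_split[OF norm_ge_zero _ \<alpha>_nonneg, of x "norm (x - z)" N "norm z"] N_greater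
      by simp
    show "(\<integral>\<^sup>+ z. ennreal (jb (norm z) powr (-N) + (if norm (x - z) \<le> 1 then norm (x - z) powr (-\<alpha>) else 0)) \<partial>lborel)
        \<le> ennreal (K + Cb)"
      using K Cb[rule_format, where x=x and \<rho>=1] \<open>0 \<le> K\<close> \<open>0 \<le> Cb\<close> by (intro nn_integral_add_le) auto
  qed (auto simp: mult_ac)
  moreover have "0 \<le> 3 powr \<alpha> * (K + Cb)"
    using \<open>0 \<le> Cb\<close> \<open>0 \<le> K\<close> by simp
  ultimately show ?thesis
    by blast
qed

lemma nn_integral_jb_powr_dist_powr_le:
  fixes N \<alpha> :: real
  assumes N_greater: "DIM('a) < N" and \<alpha>_nonneg: "0 \<le> \<alpha>" and \<alpha>_less: "\<alpha> < DIM('a)"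
  shows "\<exists>C\<ge>0. \<forall>x::'a::euclidean_space.
    (\<integral>\<^sup>+ z. ennreal (jb (norm z) powr (-N) * norm (x - z) powr (-\<alpha>)) \<partial>lborel) \<le> ennreal (C * jb (norm x) powr (-\<alpha>))"
proof -
  obtain C1 where "0 \<le> C1" and near: "\<forall>x::'a.
      (\<integral>\<^sup>+ z. ennreal (if norm (x - z) \<le> norm x / 2 then jb (norm z) powr (-N) * norm (x - z) powr (-\<alpha>) else 0) \<partial>lborel)
        \<le> ennreal (C1 * jb (norm x) powr (-\<alpha>))"
    using nn_integral_jb_powr_dist_powr_near_le[OF less_imp_le[OF N_greater] \<alpha>_nonneg \<alpha>_less] by blast
  obtain C2 where "0 \<le> C2" and far: "\<forall>x::'a.
      (\<integral>\<^sup>+ z. ennreal (if norm (x - z) \<le> norm x / 2 then 0 else jb (norm z) powr (-N) * norm (x - z) powr (-\<alpha>)) \<partial>lborel)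
        \<le> ennreal (C2 * jb (norm x) powr (-\<alpha>))"
    using nn_integral_jb_powr_dist_powr_far_le[OF N_greater \<alpha>_nonneg \<alpha>_less] by blast
  have "(\<integral>\<^sup>+ z. ennreal (jb (norm z) powr (-N) * norm (x - z) powr (-\<alpha>)) \<partial>lborel)
      \<le> ennreal ((C1 + C2) * jb (norm x) powr (-\<alpha>))" for x :: 'a
  proof -
    have "(\<integral>\<^sup>+ z. ennreal (jb (norm z) powr (-N) * norm (x - z) powr (-\<alpha>)) \<partial>lborel)
        \<le> ennreal (C1 * jb (norm x) powr (-\<alpha>)) + ennreal (C2 * jb (norm x) powr (-\<alpha>))"
      using near far by (subst nn_integral_split_pred[where P="\<lambda>z. norm (x - z) \<le> norm x / 2"])
        (auto intro: add_mono)
    thus ?thesis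
      using \<open>0 \<le> C1\<close> \<open>0 \<le> C2\<close> by (simp add: distrib_right)
  qed
  thus ?thesis
    using \<open>0 \<le> C1\<close> \<open>0 \<le> C2\<close> by (intro exI[of _ "C1 + C2"]) auto
qed

lemma nn_integral_jb_powr_dist_powr_annulus_large_le:
  fixes N \<alpha> \<beta> :: real
  assumes N_ge: "DIM('a) + \<beta> \<le> N" and \<beta>_pos: "0 < \<beta>" and \<alpha>_nonneg: "0 \<le> \<alpha>"
  shows "\<exists>C\<ge>0. \<forall>(x::'a::euclidean_space) \<rho>. 0 \<le> \<rho> \<longrightarrow> 1 \<le> norm x \<longrightarrow>
    (\<integral>\<^sup>+ z. ennreal (if \<rho> < norm z \<and> norm z \<le> norm x / 2 then jb (norm z) powr (-N) * norm (x - z) powr (-\<alpha>) else 0) \<partial>lborel)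
      \<le> ennreal (C * (jb (norm x) powr (-\<alpha>) * jb \<rho> powr (-\<beta>)))"
proof -
  have "0 \<le> N" "DIM('a) < N + 0"
    using N_ge \<beta>_pos by simp_all
  obtain Ct where "0 \<le> Ct" and Ct: "\<forall>\<rho>\<ge>0.
     (\<integral>\<^sup>+ z. ennreal (if \<rho> < norm z then jb (norm (z::'a)) powr (-N) * norm z powr (-0) else 0) \<partial>lborel)
       \<le> ennreal (Ct * jb \<rho> powr (DIM('a) - N - 0))"
    using nn_integral_jb_powr_norm_powr_outside_ball_le[OF \<open>0 \<le> N\<close> order_refl _ \<open>DIM('a) < N + 0\<close>] by auto
  have "(\<integral>\<^sup>+ z. ennreal (if \<rho> < norm z \<and> norm z \<le> norm x / 2 then jb (norm z) powr (-N) * norm (x - z) powr (-\<alpha>) else 0) \<partial>lborel)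
      \<le> ennreal (4 powr \<alpha> * Ct * (jb (norm x) powr (-\<alpha>) * jb \<rho> powr (-\<beta>)))"
    if "0 \<le> \<rho>" "1 \<le> norm x" for x :: 'a and \<rho>
  proof (rule nn_integral_le_scaled_bound)
    show "(if \<rho> < norm z \<and> norm z \<le> norm x / 2 then jb (norm z) powr (-N) * norm (x - z) powr (-\<alpha>) else 0)
        \<le> 4 powr \<alpha> * jb (norm x) powr (-\<alpha>) * (if \<rho> < norm z then jb (norm z) powr (-N) * norm z powr (-0) else 0)" for z
    proof (cases "\<rho> < norm z \<and> norm z \<le> norm x / 2")
      case True
      hence "jb (norm x) \<le> 4 * norm (x - z)" "z \<noteq> 0" "x \<noteq> z"
        using jb_le_double[OF \<open>1 \<le> norm x\<close>] norm_diff_triangle_ineqs(1)[of x z] \<open>0 \<le> \<rho>\<close> by auto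
      hence "norm (x - z) powr (-\<alpha>) \<le> 4 powr \<alpha> * jb (norm x) powr (-\<alpha>)"
        using powr_nonpos_le_scaled[of "norm (x - z)" "jb (norm x)" 4 "-\<alpha>"] jb_pos \<alpha>_nonneg by simp
      from mult_left_mono[OF this, of "jb (norm z) powr (-N)"]
      show ?thesis
        using True \<open>z \<noteq> 0\<close> by (simp add: mult_ac)
    next
      case False
      thus ?thesis
        by (simp only: if_False) simp
    qed
    show "(\<integral>\<^sup>+ z. ennreal (if \<rho> < norm z then jb (norm z) powr (-N) * norm (z::'a) powr (-0) else 0) \<partial>lborel)
        \<le> ennreal (Ct * jb \<rho> powr (DIM('a) - N - 0))"
      using Ct \<open>0 \<le> \<rho>\<close> by blast
    have "jb \<rho> powr (DIM('a) - N - 0) \<le> jb \<rho> powr (-\<beta>)"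
      using N_ge jb_ge_1 by (intro powr_mono) auto
    from mult_left_mono[OF this, of "4 powr \<alpha> * jb (norm x) powr (-\<alpha>) * Ct"]
    show "4 powr \<alpha> * jb (norm x) powr (-\<alpha>) * (Ct * jb \<rho> powr (DIM('a) - N - 0))
        \<le> 4 powr \<alpha> * Ct * (jb (norm x) powr (-\<alpha>) * jb \<rho> powr (-\<beta>))"
      using \<open>0 \<le> Ct\<close> by (simp add: ac_simps)
  qed (simp, measurable)
  moreover have "0 \<le> 4 powr \<alpha> * Ct"
    using \<open>0 \<le> Ct\<close> by simp
  ultimately show ?thesis
    by blast
qed

lemma nn_integral_jb_powr_dist_powr_annulus_small_le:
  fixes N \<alpha> \<beta> :: real
  assumes "0 \<le> N" and "0 \<le> \<beta>" and \<alpha>_nonneg: "0 \<le> \<alpha>" and \<alpha>_less: "\<alpha> < DIM('a)"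
  shows "\<exists>C\<ge>0. \<forall>(x::'a::euclidean_space) \<rho>. 0 \<le> \<rho> \<longrightarrow> \<not> 1 \<le> norm x \<longrightarrow>
    (\<integral>\<^sup>+ z. ennreal (if \<rho> < norm z \<and> norm z \<le> norm x / 2 then jb (norm z) powr (-N) * norm (x - z) powr (-\<alpha>) else 0) \<partial>lborel)
      \<le> ennreal (C * (jb (norm x) powr (-\<alpha>) * jb \<rho> powr (-\<beta>)))"
proof -
  obtain Cb where "0 \<le> Cb" and Cb: "\<forall>(x::'a) \<rho>. 0 \<le> \<rho> \<longrightarrow>
     (\<integral>\<^sup>+ z. ennreal (if norm (x - z) \<le> \<rho> then norm (x - z) powr (-\<alpha>) else 0) \<partial>lborel)
       \<le> ennreal (Cb * \<rho> powr (DIM('a) - \<alpha>))"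
    using nn_integral_dist_powr_cball_le[OF \<alpha>_nonneg \<alpha>_less] by blast
  define C where "C = 2 powr \<alpha> * 2 powr \<beta> * Cb * 2 powr (DIM('a) - \<alpha>)"
  have "(\<integral>\<^sup>+ z. ennreal (if \<rho> < norm z \<and> norm z \<le> norm x / 2 then jb (norm z) powr (-N) * norm (x - z) powr (-\<alpha>) else 0) \<partial>lborel)
      \<le> ennreal (C * (jb (norm x) powr (-\<alpha>) * jb \<rho> powr (-\<beta>)))"
    if "0 \<le> \<rho>" "\<not> 1 \<le> norm x" for x :: 'a and \<rho>
  proof (rule nn_integral_le_scaled_bound)
    let ?c = "2 powr \<alpha> * jb (norm x) powr (-\<alpha>) * (2 powr \<beta> * jb \<rho> powr (-\<beta>))"
    show "(if \<rho> < norm z \<and> norm z \<le> norm x / 2 then jb (norm z) powr (-N) * norm (x - z) powr (-\<alpha>) else 0)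
        \<le> ?c * (if norm (x - z) \<le> 2 then norm (x - z) powr (-\<alpha>) else 0)" for z
    proof (cases "\<rho> < norm z \<and> norm z \<le> norm x / 2")
      case True
      have "1 \<le> 2 powr \<alpha> * jb (norm x) powr (-\<alpha>)" "1 \<le> 2 powr \<beta> * jb \<rho> powr (-\<beta>)"
        using True that \<alpha>_nonneg \<open>0 \<le> \<beta>\<close> by (auto intro!: one_le_jb_powr_neg_scaled)
      hence "1 \<le> ?c"
        using mult_mono[of 1 _ 1] by fastforce
      moreover have "norm (x - z) \<le> 2"
        using norm_diff_triangle_ineqs(2)[of x z] True that by simp
      moreover have "jb (norm z) powr (-N) * norm (x - z) powr (-\<alpha>) \<le> 1 * norm (x - z) powr (-\<alpha>)"
        using jb_powr_nonpos_le_1[of "-N"] \<open>0 \<le> N\<close> by (intro mult_right_mono) auto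
      ultimately show ?thesis
        using True mult_right_mono[of 1 ?c "norm (x - z) powr (-\<alpha>)"] by simp
    next
      case False
      thus ?thesis
        by (simp only: if_False) simp
    qed
    show "(\<integral>\<^sup>+ z. ennreal (if norm (x - z) \<le> 2 then norm (x - z) powr (-\<alpha>) else 0) \<partial>lborel)
        \<le> ennreal (Cb * 2 powr (DIM('a) - \<alpha>))"
      using Cb[rule_format, where x=x and \<rho>=2] by simp
    show "?c * (Cb * 2 powr (DIM('a) - \<alpha>)) \<le> C * (jb (norm x) powr (-\<alpha>) * jb \<rho> powr (-\<beta>))"
      unfolding C_def by (simp add: ac_simps)
  qed (simp, measurable)
  moreover have "0 \<le> C"
    unfolding C_def using \<open>0 \<le> Cb\<close> by simp
  ultimately show ?thesis
    by blast
qed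

lemma nn_integral_jb_powr_dist_powr_annulus_le:
  fixes N \<alpha> \<beta> :: real
  assumes "DIM('a) + \<beta> \<le> N" and "0 < \<beta>" and "0 \<le> \<alpha>" and "\<alpha> < DIM('a)"
  shows "\<exists>C\<ge>0. \<forall>(x::'a::euclidean_space) \<rho>. 0 \<le> \<rho> \<longrightarrow>
    (\<integral>\<^sup>+ z. ennreal (if \<rho> < norm z \<and> norm z \<le> norm x / 2 then jb (norm z) powr (-N) * norm (x - z) powr (-\<alpha>) else 0) \<partial>lborel)
      \<le> ennreal (C * (jb (norm x) powr (-\<alpha>) * jb \<rho> powr (-\<beta>)))"
proof (rule ex_bound_cases)
  show "\<exists>C\<ge>0. \<forall>(x::'a) \<rho>. 0 \<le> \<rho> \<longrightarrow> 1 \<le> norm x \<longrightarrow>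
    (\<integral>\<^sup>+ z. ennreal (if \<rho> < norm z \<and> norm z \<le> norm x / 2 then jb (norm z) powr (-N) * norm (x - z) powr (-\<alpha>) else 0) \<partial>lborel)
      \<le> ennreal (C * (jb (norm x) powr (-\<alpha>) * jb \<rho> powr (-\<beta>)))"
    using assms by (intro nn_integral_jb_powr_dist_powr_annulus_large_le) auto
  show "\<exists>C\<ge>0. \<forall>(x::'a) \<rho>. 0 \<le> \<rho> \<longrightarrow> \<not> 1 \<le> norm x \<longrightarrow>
    (\<integral>\<^sup>+ z. ennreal (if \<rho> < norm z \<and> norm z \<le> norm x / 2 then jb (norm z) powr (-N) * norm (x - z) powr (-\<alpha>) else 0) \<partial>lborel)
      \<le> ennreal (C * (jb (norm x) powr (-\<alpha>) * jb \<rho> powr (-\<beta>)))"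
    using assms of_nat_0_le_iff[of "DIM('a)"] by (intro nn_integral_jb_powr_dist_powr_annulus_small_le) auto
qed simp

section \<open>The kernel and its four regions\<close>

text \<open>The integrand of the theorem is \<open>radial_kernel N \<alpha> \<beta> R t s\<close> with \<open>t = |z|\<close>, \<open>s = |x - z|\<close>,
  and the bound is \<open>radial_profile \<alpha> \<beta> R r\<close> with \<open>r = |x|\<close>.\<close>

definition radial_kernel :: "real \<Rightarrow> real \<Rightarrow> real \<Rightarrow> real \<Rightarrow> real \<Rightarrow> real \<Rightarrow> real" where
  "radial_kernel N \<alpha> \<beta> R t s = jb t powr (-N) / (s powr \<alpha> * jb (s + R) * jb (s - R) powr \<beta>)"

definition radial_profile :: "real \<Rightarrow> real \<Rightarrow> real \<Rightarrow> real \<Rightarrow> real" where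
  "radial_profile \<alpha> \<beta> R r = 1 / (jb r powr \<alpha> * jb (r + R) * jb (R - r) powr \<beta>)"

lemma radial_kernel_eq:
  "radial_kernel N \<alpha> \<beta> R t s = jb t powr (-N) * s powr (-\<alpha>) * inverse (jb (s + R)) * jb (s - R) powr (-\<beta>)"
  unfolding radial_kernel_def by (simp add: powr_minus divide_inverse)

lemma radial_profile_eq:
  "radial_profile \<alpha> \<beta> R r = jb r powr (-\<alpha>) * inverse (jb (r + R)) * jb \<bar>r - R\<bar> powr (-\<beta>)"
  unfolding radial_profile_def using jb_abs[of "R - r"] by (simp add: powr_minus divide_inverse abs_minus_commute)

lemma radial_profile_nonneg: "0 \<le> radial_profile \<alpha> \<beta> R r"
  unfolding radial_profile_def using less_imp_le[OF jb_pos] by simp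

lemma measurable_radial_kernel [measurable (raw)]:
  assumes [measurable]: "f \<in> borel_measurable M" "g \<in> borel_measurable M"
  shows "(\<lambda>z. radial_kernel N \<alpha> \<beta> R (f z) (g z)) \<in> borel_measurable M"
  unfolding radial_kernel_def by measurable

lemma radial_kernel_le_inner:
  assumes "0 \<le> r" "0 \<le> R" "0 \<le> s" "r \<le> s + t" "s \<le> r + t" "t \<le> \<bar>r - R\<bar> / 2" "0 \<le> \<beta>"
  shows "radial_kernel N \<alpha> \<beta> R t s
    \<le> 2 powr (1 + \<beta>) * inverse (jb (r + R)) * jb \<bar>r - R\<bar> powr (-\<beta>) * (jb t powr (-N) * s powr (-\<alpha>))"
proof -
  have "inverse (jb (s + R)) \<le> 2 * inverse (jb (r + R))"
    using assms by (intro inverse_jb_le_scaled) (auto simp: abs_if split: if_splits)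
  moreover have "jb (s - R) powr (-\<beta>) \<le> 2 powr \<beta> * jb \<bar>r - R\<bar> powr (-\<beta>)"
    using assms by (intro jb_powr_neg_le_scaled) (auto simp: abs_if split: if_splits)
  ultimately have "radial_kernel N \<alpha> \<beta> R t s
      \<le> jb t powr (-N) * s powr (-\<alpha>) * (2 * inverse (jb (r + R))) * (2 powr \<beta> * jb \<bar>r - R\<bar> powr (-\<beta>))"
    unfolding radial_kernel_eq using jb_pos by (intro mult_mono) (auto simp: less_imp_le)
  thus ?thesis
    by (simp add: powr_add algebra_simps)
qed

lemma radial_kernel_le_middle:
  assumes "0 \<le> r" "0 \<le> R" "0 \<le> s" "r \<le> s + t" "t \<le> r / 2" "0 \<le> \<beta>"
  shows "radial_kernel N \<alpha> \<beta> R t s \<le> 2 * inverse (jb (r + R)) * (jb t powr (-N) * s powr (-\<alpha>))"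
proof -
  have "inverse (jb (s + R)) \<le> 2 * inverse (jb (r + R))"
    using assms by (intro inverse_jb_le_scaled) auto
  moreover have "jb (s - R) powr (-\<beta>) \<le> 1"
    using \<open>0 \<le> \<beta>\<close> by (intro jb_powr_nonpos_le_1) simp
  ultimately have "radial_kernel N \<alpha> \<beta> R t s \<le> jb t powr (-N) * s powr (-\<alpha>) * (2 * inverse (jb (r + R))) * 1"
    unfolding radial_kernel_eq using jb_pos by (intro mult_mono) (auto simp: less_imp_le)
  thus ?thesis
    by (simp add: algebra_simps)
qed

lemma radial_kernel_le_outer:
  assumes "0 \<le> R" "0 < t" "t \<le> 2 * s" "0 \<le> \<alpha>" "0 \<le> \<beta>"
  shows "radial_kernel N \<alpha> \<beta> R t s \<le> 2 powr (1 + \<alpha>) * (jb t powr (-(N + 1)) * t powr (-\<alpha>))"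
proof -
  have "s powr (-\<alpha>) \<le> 2 powr \<alpha> * t powr (-\<alpha>)"
    using powr_nonpos_le_scaled[of s t 2 "-\<alpha>"] assms by simp
  moreover have "inverse (jb (s + R)) \<le> 2 * inverse (jb t)"
    using assms by (intro inverse_jb_le_scaled) auto
  moreover have "jb (s - R) powr (-\<beta>) \<le> 1"
    using \<open>0 \<le> \<beta>\<close> by (intro jb_powr_nonpos_le_1) simp
  ultimately have "radial_kernel N \<alpha> \<beta> R t s
      \<le> jb t powr (-N) * (2 powr \<alpha> * t powr (-\<alpha>)) * (2 * inverse (jb t)) * 1"
    unfolding radial_kernel_eq using jb_pos by (intro mult_mono) (auto simp: less_imp_le)
  also have "\<dots> = 2 powr (1 + \<alpha>) * (jb t powr (-N) * inverse (jb t) * t powr (-\<alpha>))"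
    by (simp add: powr_add)
  finally show ?thesis
    by (simp only: powr_minus_add_one[OF jb_pos])
qed

lemma radial_kernel_le_near:
  assumes "0 \<le> r" "0 \<le> R" "0 \<le> s" "t \<le> r + s" "max r \<bar>r - R\<bar> / 2 < t" "2 * s < t" "0 \<le> N" "0 \<le> \<beta>"
  shows "radial_kernel N \<alpha> \<beta> R t s
    \<le> 2 powr N * (if \<bar>r - R\<bar> < 4 * r then jb r powr (-N) else 0) * (if s \<le> r then s powr (-(\<alpha> + 1)) else 0)"
proof (cases "s = 0")
  case False
  hence "0 < s"
    using \<open>0 \<le> s\<close> by simp
  have "t < 2 * r"
    using assms by simp
  hence "\<bar>r - R\<bar> < 4 * r" "s \<le> r"
    using assms by auto
  have "jb t powr (-N) \<le> 2 powr N * jb r powr (-N)"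
    using assms by (intro jb_powr_neg_le_scaled) auto
  moreover have "inverse (jb (s + R)) \<le> inverse s"
    using abs_le_jb[of "s + R"] \<open>0 < s\<close> \<open>0 \<le> R\<close> by (intro le_imp_inverse_le) auto
  moreover have "jb (s - R) powr (-\<beta>) \<le> 1"
    using \<open>0 \<le> \<beta>\<close> by (intro jb_powr_nonpos_le_1) simp
  ultimately have "radial_kernel N \<alpha> \<beta> R t s \<le> 2 powr N * jb r powr (-N) * s powr (-\<alpha>) * inverse s * 1"
    unfolding radial_kernel_eq using jb_pos \<open>0 < s\<close> by (intro mult_mono) (auto simp: less_imp_le)
  thus ?thesis
    using \<open>\<bar>r - R\<bar> < 4 * r\<close> \<open>s \<le> r\<close>
    by (simp only: powr_minus_add_one[OF \<open>0 < s\<close>] mult.assoc mult_1_right if_True)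
qed (simp add: radial_kernel_def)

lemma jb_powr_le_radial_profile_outer:
  fixes d :: real
  assumes "0 \<le> r" "0 \<le> R" "0 \<le> \<alpha>" "0 \<le> \<beta>" "d + \<beta> \<le> N"
  shows "jb (max r \<bar>r - R\<bar> / 2) powr (d - (N + 1) - \<alpha>) \<le> 2 powr \<alpha> * 6 * 2 powr \<beta> * radial_profile \<alpha> \<beta> R r"
proof -
  define \<rho> where "\<rho> = max r \<bar>r - R\<bar> / 2"
  have "jb \<rho> powr (d - (N + 1) - \<alpha>) \<le> jb \<rho> powr (-(\<alpha> + 1) + -\<beta>)"
    using assms jb_ge_1 by (intro powr_mono) auto
  also have "\<dots> = jb \<rho> powr (-\<alpha>) * inverse (jb \<rho>) * jb \<rho> powr (-\<beta>)"
    by (simp only: powr_add powr_minus_add_one[OF jb_pos])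
  also have "\<dots> \<le> (2 powr \<alpha> * jb r powr (-\<alpha>)) * (6 * inverse (jb (r + R))) * (2 powr \<beta> * jb \<bar>r - R\<bar> powr (-\<beta>))"
  proof (intro mult_mono)
    show "jb \<rho> powr (-\<alpha>) \<le> 2 powr \<alpha> * jb r powr (-\<alpha>)"
      unfolding \<rho>_def using assms by (intro jb_powr_neg_le_scaled) auto
    show "inverse (jb \<rho>) \<le> 6 * inverse (jb (r + R))"
      unfolding \<rho>_def using assms by (intro inverse_jb_le_scaled) (auto simp: abs_if max_def split: if_splits)
    show "jb \<rho> powr (-\<beta>) \<le> 2 powr \<beta> * jb \<bar>r - R\<bar> powr (-\<beta>)"
      unfolding \<rho>_def using assms by (intro jb_powr_neg_le_scaled) auto
  qed (use jb_pos in \<open>auto simp: less_imp_le\<close>)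
  finally show ?thesis
    unfolding \<rho>_def radial_profile_eq by (simp add: algebra_simps)
qed

lemma jb_powr_le_radial_profile_near:
  fixes d :: real
  assumes "0 \<le> r" "0 \<le> R" "0 \<le> \<alpha>" "0 \<le> \<beta>" "d + \<beta> \<le> N" "\<alpha> + 1 \<le> d"
  shows "(if \<bar>r - R\<bar> < 4 * r then jb r powr (-N) else 0) * r powr (d - (\<alpha> + 1))
    \<le> 6 * 4 powr \<beta> * radial_profile \<alpha> \<beta> R r"
proof (cases "\<bar>r - R\<bar> < 4 * r")
  case True
  have "jb r powr (-N) * r powr (d - (\<alpha> + 1)) \<le> jb r powr (-N) * jb r powr (d - (\<alpha> + 1))"
    using assms abs_le_jb[of r] by (intro mult_left_mono powr_mono2) auto
  also have "\<dots> = jb r powr (d - (\<alpha> + 1) - N)"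
    by (simp add: powr_add[symmetric])
  also have "\<dots> \<le> jb r powr (-(\<alpha> + 1) + -\<beta>)"
    using assms jb_ge_1 by (intro powr_mono) auto
  also have "\<dots> = jb r powr (-\<alpha>) * inverse (jb r) * jb r powr (-\<beta>)"
    by (simp only: powr_add powr_minus_add_one[OF jb_pos])
  also have "\<dots> \<le> jb r powr (-\<alpha>) * (6 * inverse (jb (r + R))) * (4 powr \<beta> * jb \<bar>r - R\<bar> powr (-\<beta>))"
  proof (intro mult_mono)
    show "inverse (jb r) \<le> 6 * inverse (jb (r + R))"
      using assms True by (intro inverse_jb_le_scaled) (auto simp: abs_if split: if_splits)
    show "jb r powr (-\<beta>) \<le> 4 powr \<beta> * jb \<bar>r - R\<bar> powr (-\<beta>)"
      using assms True by (intro jb_powr_neg_le_scaled) auto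
  qed (use jb_pos in \<open>auto simp: less_imp_le\<close>)
  finally show ?thesis
    using True unfolding radial_profile_eq by (simp add: algebra_simps)
qed (simp add: radial_profile_nonneg)

lemma nn_integral_radial_kernel_inner_le:
  fixes N \<alpha> \<beta> :: real
  assumes N_greater: "DIM('a) < N" and \<alpha>_nonneg: "0 \<le> \<alpha>" and \<alpha>_less: "\<alpha> < DIM('a)" and "0 \<le> \<beta>"
  shows "\<exists>C\<ge>0. \<forall>(x::'a::euclidean_space) R. 0 \<le> R \<longrightarrow>
    (\<integral>\<^sup>+ z. ennreal (if norm z \<le> \<bar>norm x - R\<bar> / 2 then radial_kernel N \<alpha> \<beta> R (norm z) (norm (x - z)) else 0) \<partial>lborel)
      \<le> ennreal (C * radial_profile \<alpha> \<beta> R (norm x))"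
proof -
  obtain CL where "0 \<le> CL" and CL: "\<forall>x::'a.
      (\<integral>\<^sup>+ z. ennreal (jb (norm z) powr (-N) * norm (x - z) powr (-\<alpha>)) \<partial>lborel) \<le> ennreal (CL * jb (norm x) powr (-\<alpha>))"
    using nn_integral_jb_powr_dist_powr_le[OF N_greater \<alpha>_nonneg \<alpha>_less] by blast
  have "(\<integral>\<^sup>+ z. ennreal (if norm z \<le> \<bar>norm x - R\<bar> / 2 then radial_kernel N \<alpha> \<beta> R (norm z) (norm (x - z)) else 0) \<partial>lborel)
      \<le> ennreal (2 powr (1 + \<beta>) * CL * radial_profile \<alpha> \<beta> R (norm x))" if "0 \<le> R" for x :: 'a and R
  proof (rule nn_integral_le_scaled_bound)
    show "(if norm z \<le> \<bar>norm x - R\<bar> / 2 then radial_kernel N \<alpha> \<beta> R (norm z) (norm (x - z)) else 0)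
        \<le> 2 powr (1 + \<beta>) * inverse (jb (norm x + R)) * jb \<bar>norm x - R\<bar> powr (-\<beta>)
          * (jb (norm z) powr (-N) * norm (x - z) powr (-\<alpha>))" for z
      using radial_kernel_le_inner[where r="norm x" and s="norm (x - z)" and t="norm z"]
        norm_diff_triangle_ineqs[of x z] that \<open>0 \<le> \<beta>\<close> jb_pos by (auto simp: less_imp_le)
    show "(\<integral>\<^sup>+ z. ennreal (jb (norm z) powr (-N) * norm (x - z) powr (-\<alpha>)) \<partial>lborel)
        \<le> ennreal (CL * jb (norm x) powr (-\<alpha>))"
      using CL by blast
    show "2 powr (1 + \<beta>) * inverse (jb (norm x + R)) * jb \<bar>norm x - R\<bar> powr (-\<beta>) * (CL * jb (norm x) powr (-\<alpha>))
        \<le> 2 powr (1 + \<beta>) * CL * radial_profile \<alpha> \<beta> R (norm x)"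
      by (simp add: radial_profile_eq algebra_simps)
  qed (use jb_pos in \<open>auto simp: less_imp_le\<close>)
  moreover have "0 \<le> 2 powr (1 + \<beta>) * CL"
    using \<open>0 \<le> CL\<close> by simp
  ultimately show ?thesis
    by blast
qed

lemma nn_integral_radial_kernel_middle_le:
  fixes N \<alpha> \<beta> :: real
  assumes N_ge: "DIM('a) + \<beta> \<le> N" and \<beta>_pos: "0 < \<beta>" and \<alpha>_nonneg: "0 \<le> \<alpha>" and \<alpha>_less: "\<alpha> < DIM('a)"
  shows "\<exists>C\<ge>0. \<forall>(x::'a::euclidean_space) R. 0 \<le> R \<longrightarrow>
    (\<integral>\<^sup>+ z. ennreal (if \<bar>norm x - R\<bar> / 2 < norm z \<and> norm z \<le> norm x / 2
        then radial_kernel N \<alpha> \<beta> R (norm z) (norm (x - z)) else 0) \<partial>lborel)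
      \<le> ennreal (C * radial_profile \<alpha> \<beta> R (norm x))"
proof -
  obtain CA where "0 \<le> CA" and CA: "\<forall>(x::'a) \<rho>. 0 \<le> \<rho> \<longrightarrow>
      (\<integral>\<^sup>+ z. ennreal (if \<rho> < norm z \<and> norm z \<le> norm x / 2 then jb (norm z) powr (-N) * norm (x - z) powr (-\<alpha>) else 0) \<partial>lborel)
        \<le> ennreal (CA * (jb (norm x) powr (-\<alpha>) * jb \<rho> powr (-\<beta>)))"
    using nn_integral_jb_powr_dist_powr_annulus_le[OF N_ge \<beta>_pos \<alpha>_nonneg \<alpha>_less] by blast
  have "(\<integral>\<^sup>+ z. ennreal (if \<bar>norm x - R\<bar> / 2 < norm z \<and> norm z \<le> norm x / 2
        then radial_kernel N \<alpha> \<beta> R (norm z) (norm (x - z)) else 0) \<partial>lborel)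
      \<le> ennreal (2 * 2 powr \<beta> * CA * radial_profile \<alpha> \<beta> R (norm x))" if "0 \<le> R" for x :: 'a and R
  proof (rule nn_integral_le_scaled_bound)
    show "(if \<bar>norm x - R\<bar> / 2 < norm z \<and> norm z \<le> norm x / 2 then radial_kernel N \<alpha> \<beta> R (norm z) (norm (x - z)) else 0)
        \<le> 2 * inverse (jb (norm x + R)) * (if \<bar>norm x - R\<bar> / 2 < norm z \<and> norm z \<le> norm x / 2
          then jb (norm z) powr (-N) * norm (x - z) powr (-\<alpha>) else 0)" for z
      using radial_kernel_le_middle[where r="norm x" and s="norm (x - z)" and t="norm z"]
        norm_diff_triangle_ineqs[of x z] that \<beta>_pos jb_pos by (auto simp: less_imp_le)
    show "(\<integral>\<^sup>+ z. ennreal (if \<bar>norm x - R\<bar> / 2 < norm z \<and> norm z \<le> norm x / 2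
          then jb (norm z) powr (-N) * norm (x - z) powr (-\<alpha>) else 0) \<partial>lborel)
        \<le> ennreal (CA * (jb (norm x) powr (-\<alpha>) * jb (\<bar>norm x - R\<bar> / 2) powr (-\<beta>)))"
      using CA[rule_format, where x=x and \<rho>="\<bar>norm x - R\<bar> / 2"] by simp
    have "jb (\<bar>norm x - R\<bar> / 2) powr (-\<beta>) \<le> 2 powr \<beta> * jb \<bar>norm x - R\<bar> powr (-\<beta>)"
      using \<beta>_pos by (intro jb_powr_neg_le_scaled) auto
    hence "2 * inverse (jb (norm x + R)) * (CA * jb (norm x) powr (-\<alpha>)) * jb (\<bar>norm x - R\<bar> / 2) powr (-\<beta>)
        \<le> 2 * inverse (jb (norm x + R)) * (CA * jb (norm x) powr (-\<alpha>)) * (2 powr \<beta> * jb \<bar>norm x - R\<bar> powr (-\<beta>))"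
      using \<open>0 \<le> CA\<close> jb_pos by (intro mult_left_mono) (auto simp: less_imp_le)
    thus "2 * inverse (jb (norm x + R)) * (CA * (jb (norm x) powr (-\<alpha>) * jb (\<bar>norm x - R\<bar> / 2) powr (-\<beta>)))
        \<le> 2 * 2 powr \<beta> * CA * radial_profile \<alpha> \<beta> R (norm x)"
      by (simp add: radial_profile_eq algebra_simps)
  qed (use jb_pos in \<open>auto simp: less_imp_le\<close>)
  moreover have "0 \<le> 2 * 2 powr \<beta> * CA"
    using \<open>0 \<le> CA\<close> by simp
  ultimately show ?thesis
    by blast
qed

lemma nn_integral_radial_kernel_outer_le:
  fixes N \<alpha> \<beta> :: real
  assumes N_ge: "DIM('a) + \<beta> \<le> N" and "0 \<le> \<beta>" and \<alpha>_nonneg: "0 \<le> \<alpha>" and \<alpha>_less: "\<alpha> < DIM('a)"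
  shows "\<exists>C\<ge>0. \<forall>(x::'a::euclidean_space) R. 0 \<le> R \<longrightarrow>
    (\<integral>\<^sup>+ z. ennreal (if max (norm x) \<bar>norm x - R\<bar> / 2 < norm z \<and> norm z \<le> 2 * norm (x - z)
        then radial_kernel N \<alpha> \<beta> R (norm z) (norm (x - z)) else 0) \<partial>lborel)
      \<le> ennreal (C * radial_profile \<alpha> \<beta> R (norm x))"
proof -
  have "0 \<le> N + 1" "DIM('a) < N + 1 + \<alpha>"
    using N_ge \<open>0 \<le> \<beta>\<close> \<alpha>_nonneg by simp_all
  obtain CT where "0 \<le> CT" and CT: "\<forall>\<rho>\<ge>0.
      (\<integral>\<^sup>+ z. ennreal (if \<rho> < norm z then jb (norm (z::'a)) powr (-(N + 1)) * norm z powr (-\<alpha>) else 0) \<partial>lborel)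
        \<le> ennreal (CT * jb \<rho> powr (DIM('a) - (N + 1) - \<alpha>))"
    using nn_integral_jb_powr_norm_powr_outside_ball_le[OF \<open>0 \<le> N + 1\<close> \<alpha>_nonneg \<alpha>_less \<open>DIM('a) < N + 1 + \<alpha>\<close>]
    by blast
  define C where "C = 2 powr (1 + \<alpha>) * CT * (2 powr \<alpha> * 6 * 2 powr \<beta>)"
  have "(\<integral>\<^sup>+ z. ennreal (if max (norm x) \<bar>norm x - R\<bar> / 2 < norm z \<and> norm z \<le> 2 * norm (x - z)
        then radial_kernel N \<alpha> \<beta> R (norm z) (norm (x - z)) else 0) \<partial>lborel)
      \<le> ennreal (C * radial_profile \<alpha> \<beta> R (norm x))" if "0 \<le> R" for x :: 'a and R
  proof (rule nn_integral_le_scaled_bound)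
    define \<rho> where "\<rho> = max (norm x) \<bar>norm x - R\<bar> / 2"
    have "0 \<le> \<rho>"
      unfolding \<rho>_def by simp
    show "(if max (norm x) \<bar>norm x - R\<bar> / 2 < norm z \<and> norm z \<le> 2 * norm (x - z)
          then radial_kernel N \<alpha> \<beta> R (norm z) (norm (x - z)) else 0)
        \<le> 2 powr (1 + \<alpha>) * (if \<rho> < norm z then jb (norm z) powr (-(N + 1)) * norm z powr (-\<alpha>) else 0)" for z
      using radial_kernel_le_outer[of R "norm z" "norm (x - z)" \<alpha> \<beta> N] \<open>0 \<le> \<rho>\<close> that \<alpha>_nonneg \<open>0 \<le> \<beta>\<close>
      unfolding \<rho>_def by (cases "z = 0") auto
    show "(\<integral>\<^sup>+ z. ennreal (if \<rho> < norm z then jb (norm z) powr (-(N + 1)) * norm (z::'a) powr (-\<alpha>) else 0) \<partial>lborel)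
        \<le> ennreal (CT * jb \<rho> powr (DIM('a) - (N + 1) - \<alpha>))"
      using CT \<open>0 \<le> \<rho>\<close> by blast
    have "jb \<rho> powr (DIM('a) - (N + 1) - \<alpha>) \<le> 2 powr \<alpha> * 6 * 2 powr \<beta> * radial_profile \<alpha> \<beta> R (norm x)"
      unfolding \<rho>_def using that \<alpha>_nonneg \<open>0 \<le> \<beta>\<close> N_ge by (intro jb_powr_le_radial_profile_outer) auto
    hence "2 powr (1 + \<alpha>) * (CT * jb \<rho> powr (DIM('a) - (N + 1) - \<alpha>))
        \<le> 2 powr (1 + \<alpha>) * (CT * (2 powr \<alpha> * 6 * 2 powr \<beta> * radial_profile \<alpha> \<beta> R (norm x)))"
      using \<open>0 \<le> CT\<close> by (intro mult_left_mono) auto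
    thus "2 powr (1 + \<alpha>) * (CT * jb \<rho> powr (DIM('a) - (N + 1) - \<alpha>)) \<le> C * radial_profile \<alpha> \<beta> R (norm x)"
      unfolding C_def by (simp add: ac_simps)
  qed (auto, measurable)
  moreover have "0 \<le> C"
    unfolding C_def using \<open>0 \<le> CT\<close> by simp
  ultimately show ?thesis
    by blast
qed

lemma nn_integral_radial_kernel_near_le:
  fixes N \<alpha> \<beta> :: real
  assumes N_ge: "DIM('a) + \<beta> \<le> N" and "0 \<le> \<beta>" and \<alpha>_nonneg: "0 \<le> \<alpha>" and \<alpha>_less: "\<alpha> + 1 < DIM('a)"
  shows "\<exists>C\<ge>0. \<forall>(x::'a::euclidean_space) R. 0 \<le> R \<longrightarrow>
    (\<integral>\<^sup>+ z. ennreal (if max (norm x) \<bar>norm x - R\<bar> / 2 < norm z \<and> 2 * norm (x - z) < norm z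
        then radial_kernel N \<alpha> \<beta> R (norm z) (norm (x - z)) else 0) \<partial>lborel)
      \<le> ennreal (C * radial_profile \<alpha> \<beta> R (norm x))"
proof -
  have "0 \<le> \<alpha> + 1" "0 \<le> N"
    using N_ge \<open>0 \<le> \<beta>\<close> \<alpha>_nonneg by simp_all
  obtain Cb where "0 \<le> Cb" and Cb: "\<forall>(x::'a) \<rho>. 0 \<le> \<rho> \<longrightarrow>
      (\<integral>\<^sup>+ z. ennreal (if norm (x - z) \<le> \<rho> then norm (x - z) powr (-(\<alpha> + 1)) else 0) \<partial>lborel)
        \<le> ennreal (Cb * \<rho> powr (DIM('a) - (\<alpha> + 1)))"
    using nn_integral_dist_powr_cball_le[OF \<open>0 \<le> \<alpha> + 1\<close> \<alpha>_less] by blast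
  have "(\<integral>\<^sup>+ z. ennreal (if max (norm x) \<bar>norm x - R\<bar> / 2 < norm z \<and> 2 * norm (x - z) < norm z
        then radial_kernel N \<alpha> \<beta> R (norm z) (norm (x - z)) else 0) \<partial>lborel)
      \<le> ennreal (2 powr N * Cb * (6 * 4 powr \<beta>) * radial_profile \<alpha> \<beta> R (norm x))" if "0 \<le> R" for x :: 'a and R
  proof (rule nn_integral_le_scaled_bound)
    show "(if max (norm x) \<bar>norm x - R\<bar> / 2 < norm z \<and> 2 * norm (x - z) < norm z
          then radial_kernel N \<alpha> \<beta> R (norm z) (norm (x - z)) else 0)
        \<le> 2 powr N * (if \<bar>norm x - R\<bar> < 4 * norm x then jb (norm x) powr (-N) else 0)
          * (if norm (x - z) \<le> norm x then norm (x - z) powr (-(\<alpha> + 1)) else 0)" for z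
      using radial_kernel_le_near[where r="norm x" and s="norm (x - z)" and t="norm z"]
        norm_diff_triangle_ineqs(3)[of z x] that \<open>0 \<le> N\<close> \<open>0 \<le> \<beta>\<close> by (auto simp: norm_minus_commute)
    show "(\<integral>\<^sup>+ z. ennreal (if norm (x - z) \<le> norm x then norm (x - z) powr (-(\<alpha> + 1)) else 0) \<partial>lborel)
        \<le> ennreal (Cb * norm x powr (DIM('a) - (\<alpha> + 1)))"
      using Cb by simp
    have "(if \<bar>norm x - R\<bar> < 4 * norm x then jb (norm x) powr (-N) else 0) * norm x powr (DIM('a) - (\<alpha> + 1))
        \<le> 6 * 4 powr \<beta> * radial_profile \<alpha> \<beta> R (norm x)"
      using that \<alpha>_nonneg \<open>0 \<le> \<beta>\<close> N_ge \<alpha>_less by (intro jb_powr_le_radial_profile_near) auto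
    from mult_left_mono[OF this, of "2 powr N * Cb"]
    show "2 powr N * (if \<bar>norm x - R\<bar> < 4 * norm x then jb (norm x) powr (-N) else 0)
          * (Cb * norm x powr (DIM('a) - (\<alpha> + 1)))
        \<le> 2 powr N * Cb * (6 * 4 powr \<beta>) * radial_profile \<alpha> \<beta> R (norm x)"
      using \<open>0 \<le> Cb\<close> by (simp add: ac_simps)
  qed (auto, measurable)
  moreover have "0 \<le> 2 powr N * Cb * (6 * 4 powr \<beta>)"
    using \<open>0 \<le> Cb\<close> by simp
  ultimately show ?thesis
    by blast
qed

lemma nn_integral_radial_kernel_le_regions:
  fixes x :: "'a::euclidean_space"
  shows "(\<integral>\<^sup>+ z. ennreal (radial_kernel N \<alpha> \<beta> R (norm z) (norm (x - z))) \<partial>lborel)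
    \<le> (\<integral>\<^sup>+ z. ennreal (if norm z \<le> \<bar>norm x - R\<bar> / 2
          then radial_kernel N \<alpha> \<beta> R (norm z) (norm (x - z)) else 0) \<partial>lborel)
      + (\<integral>\<^sup>+ z. ennreal (if \<bar>norm x - R\<bar> / 2 < norm z \<and> norm z \<le> norm x / 2
          then radial_kernel N \<alpha> \<beta> R (norm z) (norm (x - z)) else 0) \<partial>lborel)
      + (\<integral>\<^sup>+ z. ennreal (if max (norm x) \<bar>norm x - R\<bar> / 2 < norm z \<and> norm z \<le> 2 * norm (x - z)
          then radial_kernel N \<alpha> \<beta> R (norm z) (norm (x - z)) else 0) \<partial>lborel)
      + (\<integral>\<^sup>+ z. ennreal (if max (norm x) \<bar>norm x - R\<bar> / 2 < norm z \<and> 2 * norm (x - z) < norm z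
          then radial_kernel N \<alpha> \<beta> R (norm z) (norm (x - z)) else 0) \<partial>lborel)"
  (is "_ \<le> (\<integral>\<^sup>+ z. ?p1 z \<partial>lborel) + (\<integral>\<^sup>+ z. ?p2 z \<partial>lborel) + (\<integral>\<^sup>+ z. ?p3 z \<partial>lborel) + (\<integral>\<^sup>+ z. ?p4 z \<partial>lborel)")
proof -
  have "(\<integral>\<^sup>+ z. ennreal (radial_kernel N \<alpha> \<beta> R (norm z) (norm (x - z))) \<partial>lborel)
      \<le> (\<integral>\<^sup>+ z. ?p1 z + ?p2 z + ?p3 z + ?p4 z \<partial>lborel)"
    by (intro nn_integral_mono) (auto simp: max_def)
  also have "\<dots> = (\<integral>\<^sup>+ z. ?p1 z \<partial>lborel) + (\<integral>\<^sup>+ z. ?p2 z \<partial>lborel) + (\<integral>\<^sup>+ z. ?p3 z \<partial>lborel) + (\<integral>\<^sup>+ z. ?p4 z \<partial>lborel)"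
    by (simp add: nn_integral_add)
  finally show ?thesis .
qed

lemma nn_integral_radial_kernel_le:
  fixes N \<alpha> \<beta> :: real
  assumes N_ge: "DIM('a) + \<beta> \<le> N" and \<beta>_pos: "0 < \<beta>" and \<alpha>_nonneg: "0 \<le> \<alpha>" and \<alpha>_less: "\<alpha> + 1 < DIM('a)"
  shows "\<exists>C>0. \<forall>(x::'a::euclidean_space) R. 0 \<le> R \<longrightarrow>
    (\<integral>\<^sup>+ z. ennreal (radial_kernel N \<alpha> \<beta> R (norm z) (norm (x - z))) \<partial>lborel)
      \<le> ennreal (C * radial_profile \<alpha> \<beta> R (norm x))"
proof -
  have "DIM('a) < N" "0 \<le> \<beta>" "\<alpha> < DIM('a)"
    using N_ge \<beta>_pos \<alpha>_less by simp_all
  note inner = nn_integral_radial_kernel_inner_le[OF \<open>DIM('a) < N\<close> \<alpha>_nonneg \<open>\<alpha> < DIM('a)\<close> \<open>0 \<le> \<beta>\<close>]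
  note middle = nn_integral_radial_kernel_middle_le[OF N_ge \<beta>_pos \<alpha>_nonneg \<open>\<alpha> < DIM('a)\<close>]
  note outer = nn_integral_radial_kernel_outer_le[OF N_ge \<open>0 \<le> \<beta>\<close> \<alpha>_nonneg \<open>\<alpha> < DIM('a)\<close>]
  note near = nn_integral_radial_kernel_near_le[OF N_ge \<open>0 \<le> \<beta>\<close> \<alpha>_nonneg \<alpha>_less]
  show ?thesis
    by (rule ex_pos_bound_mono[OF ex_bound_add[OF ex_bound_add[OF ex_bound_add[OF inner middle] outer] near]])
      (rule nn_integral_radial_kernel_le_regions radial_profile_nonneg)+
qed

theorem mainTheorem12:
  fixes n :: nat and \<alpha> \<beta> N :: real
  assumes "CARD('n::finite) = n" and "n \<ge> 3"
    and "\<beta> \<ge> 1" and "0 \<le> \<alpha>" and "\<alpha> < real n - 1" and "N \<ge> real n + \<beta>"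
  shows "\<exists>C>0. \<forall>(x::real^'n) R. R \<ge> 0 \<longrightarrow>
    (\<integral>\<^sup>+ z. ennreal (jb (norm z) powr (-N) /
        (norm (x - z) powr \<alpha> * jb (norm (x - z) + R) * jb (norm (x - z) - R) powr \<beta>)) \<partial>lborel)
    \<le> ennreal (C / (jb (norm x) powr \<alpha> * jb (norm x + R) * jb (R - norm x) powr \<beta>))"
proof -
  have "DIM(real^'n) = n"
    using assms(1) by simp
  hence "\<exists>C>0. \<forall>(x::real^'n) R. 0 \<le> R \<longrightarrow>
      (\<integral>\<^sup>+ z. ennreal (radial_kernel N \<alpha> \<beta> R (norm z) (norm (x - z))) \<partial>lborel)
        \<le> ennreal (C * radial_profile \<alpha> \<beta> R (norm x))"
    using assms by (intro nn_integral_radial_kernel_le) auto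
  thus ?thesis
    by (simp add: radial_kernel_def radial_profile_def)
qed

end
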